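(* Fix a joint distribution $P_{UV}$ with marginals $P_U,P_V$, positive integers $M,L$, and let $(U_1,\dots,U_M,V_1,\dots,V_L)\sim P_U^{\otimes M}\times P_V^{\otimes L}$. Then for every $\tau>0$ and every event $\mathcal{F}\subseteq\mathcal{U}\times\mathcal{V}$, $$\mathbb{P}\Big[\bigcap_{m=1}^M\bigcap_{l=1}^L\{(U_m,V_l)\notin\mathcal{F}\}\Big]\le\mathbb{P}[(U,V)\notin\mathcal{F}]+\mathbb{P}[\imath_{U;V}(U;V)\ge\log(ML)-\tau]+\frac{\exp(\tau)}{\max\{M,L\}}+e^{-\frac12\exp(\tau)},$$ where $(U,V)\sim P_{UV}$.
   Context: $\imath_{U;V}(u;v):=\log\frac{dP_{UV}}{d(P_U\times P_V)}(u,v)$ (information density of $P_{UV}$). *)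

theory Defs
  imports "HOL-Probability.Probability"
begin

definition marg1 :: "('a \<times> 'b) measure \<Rightarrow> 'a measure \<Rightarrow> 'a measure" where
  "marg1 P MU = distr P MU fst"

definition marg2 :: "('a \<times> 'b) measure \<Rightarrow> 'b measure \<Rightarrow> 'b measure" where
  "marg2 P MV = distr P MV snd"

definition info_density ::
  "('a \<times> 'b) measure \<Rightarrow> 'a measure \<Rightarrow> 'b measure \<Rightarrow> 'a \<times> 'b \<Rightarrow> real" where
  "info_density P MU MV z =
     ln (enn2real (RN_deriv (marg1 P MU \<Otimes>\<^sub>M marg2 P MV) P z))"

end

theory Submission
  imports Defs
begin

text \<open>
  Fix the second codebook \<open>v = (v\<^sub>1, \<dots>, v\<^sub>L)\<close>. The first codebook is independent of it, so no
  pair \<open>(u\<^sub>m, v\<^sub>l)\<close> falls into a set \<open>A\<close> with probability \<open>(1 - p v)\<^sup>M\<close>, where \<open>p v\<close> is the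
  \<open>P\<^sub>U\<close>-measure of the union of the sections of \<open>A\<close> at the \<open>v\<^sub>l\<close>. For
  \<open>A = F \<inter> {info_density < log (M L) - \<tau>}\<close> the function \<open>w = c (dP\<^sub>U\<^sub>V/d(P\<^sub>U \<times> P\<^sub>V)) 1\<^sub>A\<close> with
  \<open>c = e\<^sup>\<tau>/(M L)\<close> takes values in \<open>[0, 1]\<close>, has partial integrals at most \<open>c\<close> and total mass
  \<open>c P\<^sub>U\<^sub>V[A]\<close>. The second-order Bonferroni inequality bounds \<open>p v\<close> from below by
  \<open>\<Sum>\<^sub>l E w(U, v\<^sub>l)\<close> minus the pairwise products; with
  \<open>(1 - p)\<^sup>M \<le> exp (-M p) \<le> 1 - min 1 (p/(L c)) + exp (-M L c)\<close> (convexity of \<open>exp\<close>) and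
  independence of the \<open>v\<^sub>l\<close>, which makes the pairwise term at most \<open>L\<^sup>2 c\<^sup>2/2\<close>, averaging over \<open>v\<close>
  gives \<open>1 - P\<^sub>U\<^sub>V[A] + L c/2 + exp (-M L c)\<close>. Exchanging the two codebooks replaces \<open>L\<close> by
  \<open>min M L\<close>.
\<close>

lemma prod_one_minus_ge_one_minus_sum:
  fixes a :: "nat \<Rightarrow> real"
  assumes "\<And>i. i < n \<Longrightarrow> 0 \<le> a i \<and> a i \<le> 1"
  shows "1 - (\<Sum>i<n. a i) \<le> (\<Prod>i<n. 1 - a i)"
  using assms
proof (induction n)
  case 0
  then show ?case by simp
next
  case (Suc n)
  have an: "0 \<le> a n" "a n \<le> 1"
    using Suc.prems by auto
  have "0 \<le> (\<Sum>i<n. a i) * a n"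
    using Suc.prems an by (intro mult_nonneg_nonneg sum_nonneg) auto
  then have "1 - (\<Sum>i<Suc n. a i) \<le> (1 - (\<Sum>i<n. a i)) * (1 - a n)"
    by (simp add: algebra_simps)
  also have "\<dots> \<le> (\<Prod>i<n. 1 - a i) * (1 - a n)"
    using Suc an by (intro mult_right_mono) auto
  finally show ?case by simp
qed

lemma sum_minus_pair_products_le_one_minus_prod:
  fixes a :: "nat \<Rightarrow> real"
  assumes "\<And>i. i < n \<Longrightarrow> 0 \<le> a i \<and> a i \<le> 1"
  shows "(\<Sum>i<n. a i) - (\<Sum>i<n. \<Sum>j<i. a i * a j) \<le> 1 - (\<Prod>i<n. 1 - a i)"
  using assms
proof (induction n)
  case 0
  then show ?case by simp
next
  case (Suc n)
  have "a n * (1 - (\<Sum>i<n. a i)) \<le> a n * (\<Prod>i<n. 1 - a i)"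
    using Suc.prems by (intro mult_left_mono prod_one_minus_ge_one_minus_sum) auto
  then show ?case
    using Suc by (simp add: sum_distrib_left algebra_simps)
qed

lemma sum_lessThan_real_le_half_square: "(\<Sum>i<n. real i) \<le> real n ^ 2 / 2"
  by (induction n) (auto simp: power2_eq_square field_simps)

lemma exp_neg_le_one_minus_min:
  fixes x a :: real
  assumes "0 \<le> x" "0 < a"
  shows "exp (-x) \<le> 1 - min 1 (x / a) + exp (-a)"
proof (cases "a \<le> x")
  case True
  then show ?thesis
    using assms by simp
next
  case False
  define t where "t = x / a"
  have t: "0 \<le> t" "t \<le> 1"
    using False assms by (auto simp: t_def)
  have "exp (-x) = exp ((1 - t) *\<^sub>R 0 + t *\<^sub>R (-a))"
    using assms by (simp add: t_def)
  also have "\<dots> \<le> (1 - t) * exp 0 + t * exp (-a)"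
    using t by (intro convex_onD[OF exp_convex]) auto
  also have "\<dots> \<le> 1 - t + exp (-a)"
    using t by (simp add: mult_left_le_one_le)
  finally show ?thesis
    using t by (simp add: t_def)
qed

lemma power_one_minus_le_one_minus_min:
  fixes p q d K :: real
  assumes "0 \<le> p" "p \<le> 1" "0 \<le> d" "q \<le> p + d" "0 < K"
  shows "(1 - p) ^ M \<le> 1 - min 1 (q / K) + d / K + exp (- (M * K))"
proof (cases "M = 0")
  case True
  have "min 1 (q / K) \<le> 1" "0 \<le> d / K"
    using assms by auto
  then show ?thesis
    using True by simp
next
  case False
  have "(1 - p) ^ M \<le> exp (-p) ^ M"
    using assms by (intro power_mono) (auto simp: exp_ge_add_one_self[of "-p", simplified])
  also have "\<dots> = exp (- (M * p))"
    by (simp add: exp_of_nat_mult[symmetric])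
  also have "\<dots> \<le> 1 - min 1 (M * p / (M * K)) + exp (- (M * K))"
    using assms False by (intro exp_neg_le_one_minus_min) auto
  also have "M * p / (M * K) = p / K"
    using False by simp
  finally have "(1 - p) ^ M \<le> 1 - min 1 (p / K) + exp (- (M * K))" .
  moreover have "min 1 (q / K) - d / K \<le> min 1 (p / K)"
  proof -
    have "q / K - d / K \<le> p / K" "0 \<le> d / K"
      using assms by (auto simp: diff_divide_distrib[symmetric] divide_right_mono)
    then show ?thesis
      by (auto simp: min_def)
  qed
  ultimately show ?thesis by linarith
qed

definition no_pair_event ::
  "'a measure \<Rightarrow> 'b measure \<Rightarrow> nat \<Rightarrow> nat \<Rightarrow> ('a \<times> 'b) set \<Rightarrow> ((nat \<Rightarrow> 'a) \<times> (nat \<Rightarrow> 'b)) set" where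
  "no_pair_event X Y M L A =
     {(u, v) \<in> space (PiM {..<M} (\<lambda>_. X) \<Otimes>\<^sub>M PiM {..<L} (\<lambda>_. Y)). \<forall>m<M. \<forall>l<L. (u m, v l) \<notin> A}"

lemma no_pair_event_in_sets:
  assumes "A \<in> sets (X \<Otimes>\<^sub>M Y)"
  shows "no_pair_event X Y M L A \<in> sets (PiM {..<M} (\<lambda>_. X) \<Otimes>\<^sub>M PiM {..<L} (\<lambda>_. Y))"
proof -
  let ?S = "PiM {..<M} (\<lambda>_. X) \<Otimes>\<^sub>M PiM {..<L} (\<lambda>_. Y)"
  have "(\<lambda>z. (fst z m, snd z l)) -` A \<inter> space ?S \<in> sets ?S" if "m < M" "l < L" for m l
    using that by (intro measurable_sets[OF _ assms] measurable_Pair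
        measurable_compose[OF measurable_fst measurable_component_singleton]
        measurable_compose[OF measurable_snd measurable_component_singleton]) auto
  then have "space ?S - (\<Union>m<M. \<Union>l<L. (\<lambda>z. (fst z m, snd z l)) -` A \<inter> space ?S) \<in> sets ?S"
    by (intro sets.Diff sets.top sets.finite_UN) auto
  also have "space ?S - (\<Union>m<M. \<Union>l<L. (\<lambda>z. (fst z m, snd z l)) -` A \<inter> space ?S) = no_pair_event X Y M L A"
    unfolding no_pair_event_def by auto
  finally show ?thesis .
qed

lemma no_pair_event_antimono: "A \<subseteq> B \<Longrightarrow> no_pair_event X Y M L B \<subseteq> no_pair_event X Y M L A"
  by (auto simp: no_pair_event_def)

lemma exists_pair_in_sets:
  fixes L :: nat
  assumes A: "A \<in> sets (X \<Otimes>\<^sub>M Y)" and v: "v \<in> space (PiM {..<L} (\<lambda>_. Y))"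
  shows "{x \<in> space X. \<exists>l<L. (x, v l) \<in> A} \<in> sets X"
proof -
  have "{x \<in> space X. \<exists>l<L. (x, v l) \<in> A} = (\<Union>l<L. (\<lambda>x. (x, v l)) -` A \<inter> space X)"
    by auto
  also have "\<dots> \<in> sets X"
  proof (intro sets.finite_UN finite_lessThan ballI)
    fix l assume "l \<in> {..<L}"
    then have "v l \<in> space Y"
      using v by (auto simp: space_PiM)
    then show "(\<lambda>x. (x, v l)) -` A \<inter> space X \<in> sets X"
      by (intro measurable_sets[OF measurable_Pair2' A])
  qed
  finally show ?thesis .
qed

lemma emeasure_no_pair_event:
  assumes X: "prob_space X" and Y: "prob_space Y" and A: "A \<in> sets (X \<Otimes>\<^sub>M Y)"
  shows "emeasure (PiM {..<M} (\<lambda>_. X) \<Otimes>\<^sub>M PiM {..<L} (\<lambda>_. Y)) (no_pair_event X Y M L A)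
    = (\<integral>\<^sup>+ v. ennreal ((1 - measure X {x \<in> space X. \<exists>l<L. (x, v l) \<in> A}) ^ M) \<partial>PiM {..<L} (\<lambda>_. Y))"
proof -
  interpret X: prob_space X by fact
  interpret PX: prob_space "PiM {..<M} (\<lambda>_. X)" by (intro prob_space_PiM X)
  interpret PY: prob_space "PiM {..<L} (\<lambda>_. Y)" by (intro prob_space_PiM Y)
  interpret PXY: pair_sigma_finite "PiM {..<M} (\<lambda>_. X)" "PiM {..<L} (\<lambda>_. Y)" ..
  have psf: "product_sigma_finite (\<lambda>_::nat. X)"
    by (simp add: product_sigma_finite_def X.sigma_finite_measure_axioms)
  show ?thesis
    unfolding PXY.emeasure_pair_measure_alt2[OF no_pair_event_in_sets[OF A]]
  proof (intro nn_integral_cong)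
    fix v assume v: "v \<in> space (PiM {..<L} (\<lambda>_. Y))"
    define B where "B = {x \<in> space X. \<exists>l<L. (x, v l) \<in> A}"
    have B: "B \<in> sets X"
      unfolding B_def by (rule exists_pair_in_sets[OF A v])
    have "(\<lambda>u. (u, v)) -` no_pair_event X Y M L A = PiE {..<M} (\<lambda>_. space X - B)"
      using v by (auto simp: no_pair_event_def B_def space_pair_measure space_PiM PiE_iff extensional_def)
    then have "emeasure (PiM {..<M} (\<lambda>_. X)) ((\<lambda>u. (u, v)) -` no_pair_event X Y M L A)
        = (\<Prod>m<M. emeasure X (space X - B))"
      using B by (simp add: product_sigma_finite.emeasure_PiM[OF psf])
    also have "\<dots> = ennreal ((1 - measure X B) ^ M)"
      using B by (simp add: X.emeasure_eq_measure X.prob_compl ennreal_power)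
    finally show "emeasure (PiM {..<M} (\<lambda>_. X)) ((\<lambda>u. (u, v)) -` no_pair_event X Y M L A)
        = ennreal ((1 - measure X {x \<in> space X. \<exists>l<L. (x, v l) \<in> A}) ^ M)"
      by (simp add: B_def)
  qed
qed

lemma measure_no_pair_event_swap:
  assumes X: "prob_space X" and Y: "prob_space Y" and A: "A \<in> sets (X \<Otimes>\<^sub>M Y)"
  shows "measure (PiM {..<M} (\<lambda>_. X) \<Otimes>\<^sub>M PiM {..<L} (\<lambda>_. Y)) (no_pair_event X Y M L A)
    = measure (PiM {..<L} (\<lambda>_. Y) \<Otimes>\<^sub>M PiM {..<M} (\<lambda>_. X))
        (no_pair_event Y X L M ((\<lambda>(y, x). (x, y)) -` A \<inter> space (Y \<Otimes>\<^sub>M X)))"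
proof -
  let ?PX = "PiM {..<M} (\<lambda>_. X)" and ?PY = "PiM {..<L} (\<lambda>_. Y)"
  interpret PX: prob_space ?PX by (intro prob_space_PiM X)
  interpret PY: prob_space ?PY by (intro prob_space_PiM Y)
  interpret PXY: pair_sigma_finite ?PX ?PY ..
  have "measure (?PX \<Otimes>\<^sub>M ?PY) (no_pair_event X Y M L A)
      = measure (distr (?PY \<Otimes>\<^sub>M ?PX) (?PX \<Otimes>\<^sub>M ?PY) (\<lambda>(x, y). (y, x))) (no_pair_event X Y M L A)"
    by (simp add: PXY.distr_pair_swap[symmetric])
  also have "\<dots> = measure (?PY \<Otimes>\<^sub>M ?PX) ((\<lambda>(x, y). (y, x)) -` no_pair_event X Y M L A \<inter> space (?PY \<Otimes>\<^sub>M ?PX))"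
    by (rule measure_distr[OF measurable_pair_swap' no_pair_event_in_sets[OF A]])
  also have "(\<lambda>(x, y). (y, x)) -` no_pair_event X Y M L A \<inter> space (?PY \<Otimes>\<^sub>M ?PX)
      = no_pair_event Y X L M ((\<lambda>(y, x). (x, y)) -` A \<inter> space (Y \<Otimes>\<^sub>M X))"
    by (auto simp: no_pair_event_def space_pair_measure space_PiM PiE_iff extensional_def)
  finally show ?thesis .
qed

lemma integral_PiM_component:
  fixes f :: "'a \<Rightarrow> 'c::{banach, second_countable_topology}"
  assumes "\<And>i. i \<in> I \<Longrightarrow> prob_space (M i)" "i \<in> I" "f \<in> borel_measurable (M i)"
  shows "(\<integral>\<omega>. f (\<omega> i) \<partial>PiM I M) = integral\<^sup>L (M i) f"
proof -
  have "integral\<^sup>L (M i) f = integral\<^sup>L (distr (PiM I M) (M i) (\<lambda>\<omega>. \<omega> i)) f"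
    using assms by (simp add: distr_PiM_component)
  also have "\<dots> = (\<integral>\<omega>. f (\<omega> i) \<partial>PiM I M)"
    using assms by (intro integral_distr) auto
  finally show ?thesis by simp
qed

lemma prod_if_two:
  fixes a b :: "'i \<Rightarrow> 'c::comm_monoid_mult"
  assumes "finite I" "i \<in> I" "j \<in> I" "i \<noteq> j"
  shows "(\<Prod>n\<in>I. if n = i then a n else if n = j then b n else 1) = a i * b j"
proof -
  have "(\<Prod>n\<in>I. if n = i then a n else if n = j then b n else 1)
      = (\<Prod>n\<in>{i, j}. if n = i then a n else if n = j then b n else 1)"
    using assms by (intro prod.mono_neutral_right) auto
  then show ?thesis
    using assms by simp
qed

lemma
  fixes f g :: "'a \<Rightarrow> real"
  assumes Y: "prob_space Y" and I: "finite I" "i \<in> I" "j \<in> I" "i \<noteq> j"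
    and f: "integrable Y f" and g: "integrable Y g"
  shows integrable_PiM_mult_components: "integrable (PiM I (\<lambda>_. Y)) (\<lambda>\<omega>. f (\<omega> i) * g (\<omega> j))"
    and integral_PiM_mult_components:
      "(\<integral>\<omega>. f (\<omega> i) * g (\<omega> j) \<partial>PiM I (\<lambda>_. Y)) = integral\<^sup>L Y f * integral\<^sup>L Y g"
proof -
  interpret Y: prob_space Y by fact
  have psf: "product_sigma_finite (\<lambda>_::'i. Y)"
    by (simp add: product_sigma_finite_def Y.sigma_finite_measure_axioms)
  define h where "h n = (if n = i then f else if n = j then g else (\<lambda>_. 1))" for n
  have h: "integrable Y (h n)" for n
    using f g by (simp add: h_def)
  have h_apply: "h n y = (if n = i then f y else if n = j then g y else 1)" for n y
    by (simp add: h_def)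
  have h_integral: "integral\<^sup>L Y (h n) = (if n = i then integral\<^sup>L Y f else if n = j then integral\<^sup>L Y g else 1)" for n
    by (simp add: h_def Y.prob_space)
  have eq: "f (\<omega> i) * g (\<omega> j) = (\<Prod>n\<in>I. h n (\<omega> n))" for \<omega>
    by (simp only: h_apply prod_if_two[OF I])
  show "integrable (PiM I (\<lambda>_. Y)) (\<lambda>\<omega>. f (\<omega> i) * g (\<omega> j))"
    unfolding eq using I h by (intro product_sigma_finite.product_integrable_prod[OF psf]) auto
  have "(\<Prod>n\<in>I. integral\<^sup>L Y (h n)) = integral\<^sup>L Y f * integral\<^sup>L Y g"
    by (simp only: h_integral prod_if_two[OF I])
  then show "(\<integral>\<omega>. f (\<omega> i) * g (\<omega> j) \<partial>PiM I (\<lambda>_. Y)) = integral\<^sup>L Y f * integral\<^sup>L Y g"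
    unfolding eq using I h by (subst product_sigma_finite.product_integral_prod[OF psf]) auto
qed

lemma integral_PiM_pair_products:
  fixes f :: "'b \<Rightarrow> real"
  assumes Y: "prob_space Y" and f: "integrable Y f"
  shows "(\<integral>v. (\<Sum>i<L. \<Sum>j<i. f (v i) * f (v j)) \<partial>PiM {..<L} (\<lambda>_. Y))
    = (\<Sum>i<L. real i) * (integral\<^sup>L Y f)\<^sup>2"
proof -
  have int: "integrable (PiM {..<L} (\<lambda>_. Y)) (\<lambda>v. f (v i) * f (v j))" if "j < i" "i < L" for i j
    using that by (intro integrable_PiM_mult_components Y f) auto
  have "(\<integral>v. (\<Sum>i<L. \<Sum>j<i. f (v i) * f (v j)) \<partial>PiM {..<L} (\<lambda>_. Y))
      = (\<Sum>i<L. \<integral>v. (\<Sum>j<i. f (v i) * f (v j)) \<partial>PiM {..<L} (\<lambda>_. Y))"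
    using int by (intro Bochner_Integration.integral_sum Bochner_Integration.integrable_sum) auto
  also have "\<dots> = (\<Sum>i<L. \<Sum>j<i. \<integral>v. f (v i) * f (v j) \<partial>PiM {..<L} (\<lambda>_. Y))"
    using int by (intro sum.cong refl Bochner_Integration.integral_sum) auto
  also have "\<dots> = (\<Sum>i<L. \<Sum>j<i. (integral\<^sup>L Y f)\<^sup>2)"
    by (intro sum.cong refl) (simp add: integral_PiM_mult_components[OF Y] f power2_eq_square)
  finally show ?thesis
    by (simp add: sum_distrib_right)
qed

lemma integral_le_integral_min_one_average:
  fixes g :: "'b \<Rightarrow> real" and L :: nat
  assumes Y: "prob_space Y" and g: "g \<in> borel_measurable Y" "\<And>y. y \<in> space Y \<Longrightarrow> 0 \<le> g y"
    and g_le_1: "AE y in Y. g y \<le> 1" and L: "0 < L"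
  shows "(\<integral>y. g y \<partial>Y) \<le> (\<integral>v. min 1 ((\<Sum>l<L. g (v l)) / L) \<partial>PiM {..<L} (\<lambda>_. Y))"
proof -
  let ?PY = "PiM {..<L} (\<lambda>_. Y)"
  interpret PY: prob_space ?PY by (intro prob_space_PiM Y)
  have comp: "(\<lambda>v. v l) \<in> measurable ?PY Y" if "l < L" for l
    using that by (intro measurable_component_singleton) auto
  have comp_space: "v l \<in> space Y" if "v \<in> space ?PY" "l < L" for v l
    using measurable_space[OF comp[OF that(2)] that(1)] .
  have min_g: "(\<lambda>y. min 1 (g y)) \<in> borel_measurable Y"
    using g by measurable
  have int: "integrable ?PY (\<lambda>v. min 1 (g (v l)))" if "l < L" for l
    using that g comp_space
    by (intro PY.integrable_const_bound[where B=1] AE_I2 measurable_compose[OF comp min_g]) auto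
  have "(\<integral>y. g y \<partial>Y) = (\<integral>y. min 1 (g y) \<partial>Y)"
    using g_le_1 by (intro integral_cong_AE g min_g) (auto elim: AE_mp)
  also have "\<dots> = (\<Sum>l<L. \<integral>v. min 1 (g (v l)) \<partial>?PY) / L"
  proof -
    have "(\<integral>v. min 1 (g (v l)) \<partial>?PY) = (\<integral>y. min 1 (g y) \<partial>Y)" if "l < L" for l
      using that Y min_g by (intro integral_PiM_component) auto
    then have "(\<Sum>l<L. \<integral>v. min 1 (g (v l)) \<partial>?PY) = L * (\<integral>y. min 1 (g y) \<partial>Y)"
      by simp
    then show ?thesis
      using L by simp
  qed
  also have "\<dots> = (\<integral>v. (\<Sum>l<L. min 1 (g (v l))) / L \<partial>?PY)"
    using int by (simp add: Bochner_Integration.integral_sum)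
  also have "\<dots> \<le> (\<integral>v. min 1 ((\<Sum>l<L. g (v l)) / L) \<partial>?PY)"
  proof (rule integral_mono)
    show "integrable ?PY (\<lambda>v. (\<Sum>l<L. min 1 (g (v l))) / L)"
      using int by (intro integrable_divide Bochner_Integration.integrable_sum) auto
    show "integrable ?PY (\<lambda>v. min 1 ((\<Sum>l<L. g (v l)) / L))"
    proof (intro PY.integrable_const_bound[where B=1] AE_I2)
      fix v assume "v \<in> space ?PY"
      then have "0 \<le> (\<Sum>l<L. g (v l)) / L"
        using g comp_space by (auto intro!: sum_nonneg divide_nonneg_nonneg)
      then show "norm (min 1 ((\<Sum>l<L. g (v l)) / L)) \<le> 1"
        by simp
    qed (intro borel_measurable_min borel_measurable_divide borel_measurable_sum borel_measurable_const
        measurable_compose[OF comp g(1)]; simp)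
    fix v
    have "(\<Sum>l<L. min 1 (g (v l))) \<le> (\<Sum>l<L. 1)" "(\<Sum>l<L. min 1 (g (v l))) \<le> (\<Sum>l<L. g (v l))"
      by (intro sum_mono; simp)+
    then show "(\<Sum>l<L. min 1 (g (v l))) / L \<le> min 1 ((\<Sum>l<L. g (v l)) / L)"
      using L by (simp add: divide_right_mono)
  qed
  finally show ?thesis .
qed

lemma sum_integrals_minus_pair_products_le_measure:
  fixes w :: "nat \<Rightarrow> 'a \<Rightarrow> real"
  assumes X: "prob_space X" and B: "B \<in> sets X"
    and w: "\<And>l. l < n \<Longrightarrow> w l \<in> borel_measurable X" "\<And>l x. 0 \<le> w l x \<and> w l x \<le> 1"
    and supp: "\<And>l x. l < n \<Longrightarrow> x \<in> space X \<Longrightarrow> w l x \<noteq> 0 \<Longrightarrow> x \<in> B"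
  shows "(\<Sum>l<n. \<integral>x. w l x \<partial>X) - (\<integral>x. (\<Sum>i<n. \<Sum>j<i. w i x * w j x) \<partial>X) \<le> measure X B"
proof -
  interpret X: prob_space X by fact
  have int_w: "integrable X (w l)" if "l < n" for l
    using that w by (intro X.integrable_const_bound[where B=1] AE_I2) auto
  have int_pairs: "integrable X (\<lambda>x. \<Sum>i<n. \<Sum>j<i. w i x * w j x)"
    using w by (intro Bochner_Integration.integrable_sum X.integrable_const_bound[where B=1] AE_I2)
      (auto simp: mult_le_one)
  have int_diff: "integrable X (\<lambda>x. (\<Sum>l<n. w l x) - (\<Sum>i<n. \<Sum>j<i. w i x * w j x))"
    by (rule Bochner_Integration.integrable_diff[OF Bochner_Integration.integrable_sum int_pairs])
       (use int_w in auto)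
  have pointwise: "(\<Sum>l<n. w l x) - (\<Sum>i<n. \<Sum>j<i. w i x * w j x) \<le> indicator B x"
    if x: "x \<in> space X" for x
  proof (cases "x \<in> B")
    case True
    have "0 \<le> (\<Prod>l<n. 1 - w l x)"
      using w by (intro prod_nonneg) auto
    then show ?thesis
      using True sum_minus_pair_products_le_one_minus_prod[of n "\<lambda>l. w l x"] w by auto
  next
    case False
    then have "w l x = 0" if "l < n" for l
      using supp x that by blast
    then show ?thesis
      using False by simp
  qed
  have "(\<Sum>l<n. \<integral>x. w l x \<partial>X) - (\<integral>x. (\<Sum>i<n. \<Sum>j<i. w i x * w j x) \<partial>X)
      = (\<integral>x. (\<Sum>l<n. w l x) - (\<Sum>i<n. \<Sum>j<i. w i x * w j x) \<partial>X)"
    using int_w int_pairs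
    by (subst Bochner_Integration.integral_diff)
       (auto intro!: Bochner_Integration.integrable_sum simp: Bochner_Integration.integral_sum)
  also have "\<dots> \<le> (\<integral>x. indicator B x \<partial>X)"
    using int_diff pointwise B by (intro integral_mono) (auto simp: X.emeasure_eq_measure)
  also have "\<dots> = measure X B"
    using B by simp
  finally show ?thesis .
qed

lemma borel_measurable_integral_first:
  fixes w :: "'a \<times> 'b \<Rightarrow> real"
  assumes X: "sigma_finite_measure X" and w: "w \<in> borel_measurable (X \<Otimes>\<^sub>M Y)"
  shows "(\<lambda>y. \<integral>x. w (x, y) \<partial>X) \<in> borel_measurable Y"
proof -
  interpret X: sigma_finite_measure X by fact
  have "(\<lambda>(y, x). w (x, y)) \<in> borel_measurable (Y \<Otimes>\<^sub>M X)"
    using measurable_compose[OF measurable_pair_swap' w] by (simp add: case_prod_beta')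
  then show ?thesis
    by (intro X.borel_measurable_lebesgue_integral) simp
qed

lemma
  fixes w :: "'a \<times> 'b \<Rightarrow> real" and L :: nat and c :: real
  assumes X: "prob_space X" and Y: "prob_space Y"
    and w: "w \<in> borel_measurable (X \<Otimes>\<^sub>M Y)" "\<And>z. 0 \<le> w z \<and> w z \<le> 1"
    and w_fst: "AE x in X. (\<integral>y. w (x, y) \<partial>Y) \<le> c"
  shows integrable_pair_products_weight:
      "integrable (PiM {..<L} (\<lambda>_. Y)) (\<lambda>v. \<integral>x. (\<Sum>i<L. \<Sum>j<i. w (x, v i) * w (x, v j)) \<partial>X)"
    and integral_pair_products_weight_le:
      "(\<integral>v. (\<integral>x. (\<Sum>i<L. \<Sum>j<i. w (x, v i) * w (x, v j)) \<partial>X) \<partial>PiM {..<L} (\<lambda>_. Y))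
        \<le> real L ^ 2 * c\<^sup>2 / 2"
proof -
  let ?PY = "PiM {..<L} (\<lambda>_. Y)"
  let ?H = "\<lambda>x v. \<Sum>i<L. \<Sum>j<i. w (x, v i) * w (x, v j)"
  interpret X: prob_space X by fact
  interpret Y: prob_space Y by fact
  interpret PY: prob_space ?PY by (intro prob_space_PiM Y)
  interpret XPY: pair_sigma_finite X ?PY ..
  interpret XPY: prob_space "X \<Otimes>\<^sub>M ?PY" by (intro prob_space_pair X.prob_space_axioms PY.prob_space_axioms)
  have component: "(\<lambda>v. v i) \<in> measurable ?PY Y" if "i < L" for i
    using that by (intro measurable_component_singleton) auto
  have comp: "(\<lambda>z. w (fst z, snd z i)) \<in> borel_measurable (X \<Otimes>\<^sub>M ?PY)" if "i < L" for i
    by (rule measurable_compose[OF measurable_Pair[OF measurable_fst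
          measurable_compose[OF measurable_snd component[OF that]]] w(1)])
  have H_int: "integrable (X \<Otimes>\<^sub>M ?PY) (case_prod ?H)"
    using w comp unfolding case_prod_beta'
    by (intro Bochner_Integration.integrable_sum XPY.integrable_const_bound[where B=1] AE_I2
        borel_measurable_times) (auto simp: mult_le_one)
  show "integrable ?PY (\<lambda>v. \<integral>x. ?H x v \<partial>X)"
    by (rule XPY.integrable_snd[OF H_int])
  have inner: "(\<integral>v. ?H x v \<partial>?PY) = (\<Sum>i<L. real i) * (\<integral>y. w (x, y) \<partial>Y)\<^sup>2" if "x \<in> space X" for x
    using that w by (intro integral_PiM_pair_products Y Y.integrable_const_bound[where B=1] AE_I2
        measurable_compose_Pair1[OF _ w(1)]) auto
  have "(\<integral>v. (\<integral>x. ?H x v \<partial>X) \<partial>?PY) = (\<integral>x. (\<integral>v. ?H x v \<partial>?PY) \<partial>X)"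
    by (rule XPY.Fubini_integral[OF H_int])
  also have "\<dots> \<le> (\<integral>x. real L ^ 2 / 2 * c\<^sup>2 \<partial>X)"
  proof (rule integral_mono_AE)
    show "integrable X (\<lambda>x. \<integral>v. ?H x v \<partial>?PY)"
      by (rule XPY.integrable_fst[OF H_int])
    show "AE x in X. (\<integral>v. ?H x v \<partial>?PY) \<le> real L ^ 2 / 2 * c\<^sup>2"
      using w_fst AE_space
    proof eventually_elim
      case (elim x)
      have "0 \<le> (\<integral>y. w (x, y) \<partial>Y)"
        using w by (intro integral_nonneg_AE AE_I2) auto
      then have "(\<integral>y. w (x, y) \<partial>Y)\<^sup>2 \<le> c\<^sup>2"
        using elim by (intro power_mono) auto
      then show ?case
        unfolding inner[OF elim(2)] using sum_lessThan_real_le_half_square[of L]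
        by (intro mult_mono) auto
    qed
  qed simp
  finally show "(\<integral>v. (\<integral>x. ?H x v \<partial>X) \<partial>?PY) \<le> real L ^ 2 * c\<^sup>2 / 2"
    by (simp add: X.prob_space)
qed

lemma integral_weight_le_integral_min_one:
  fixes w :: "'a \<times> 'b \<Rightarrow> real" and L :: nat and c :: real
  assumes X: "prob_space X" and Y: "prob_space Y"
    and w: "w \<in> borel_measurable (X \<Otimes>\<^sub>M Y)" "\<And>z. 0 \<le> w z \<and> w z \<le> 1"
    and c: "0 < c" and w_snd: "AE y in Y. (\<integral>x. w (x, y) \<partial>X) \<le> c" and L: "0 < L"
  shows "(\<integral>z. w z \<partial>(X \<Otimes>\<^sub>M Y)) / c
    \<le> (\<integral>v. min 1 ((\<Sum>l<L. \<integral>x. w (x, v l) \<partial>X) / (L * c)) \<partial>PiM {..<L} (\<lambda>_. Y))"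
proof -
  interpret X: prob_space X by fact
  interpret Y: prob_space Y by fact
  interpret XY: pair_sigma_finite X Y ..
  interpret XY: prob_space "X \<Otimes>\<^sub>M Y" by (intro prob_space_pair X.prob_space_axioms Y.prob_space_axioms)
  define g where "g y = (\<integral>x. w (x, y) \<partial>X) / c" for y
  have w_int: "integrable (X \<Otimes>\<^sub>M Y) w"
    using w by (intro XY.integrable_const_bound[where B=1] AE_I2) auto
  have g_meas: "g \<in> borel_measurable Y"
    unfolding g_def
    by (intro borel_measurable_divide borel_measurable_integral_first[OF X.sigma_finite_measure_axioms w(1)]
        borel_measurable_const)
  have g_nonneg: "0 \<le> g y" for y
    unfolding g_def using w c by (intro divide_nonneg_pos integral_nonneg_AE AE_I2) auto
  have g_le_1: "AE y in Y. g y \<le> 1"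
    using w_snd by eventually_elim (use c in \<open>simp add: g_def\<close>)
  have "(\<integral>z. w z \<partial>(X \<Otimes>\<^sub>M Y)) / c = (\<integral>y. g y \<partial>Y)"
    using XY.integral_snd[of "\<lambda>x y. w (x, y)"] w_int by (simp add: g_def)
  also have "\<dots> \<le> (\<integral>v. min 1 ((\<Sum>l<L. g (v l)) / L) \<partial>PiM {..<L} (\<lambda>_. Y))"
    using g_meas g_nonneg g_le_1 L by (intro integral_le_integral_min_one_average Y) auto
  also have "(\<lambda>v. (\<Sum>l<L. g (v l)) / L) = (\<lambda>v. (\<Sum>l<L. \<integral>x. w (x, v l) \<partial>X) / (L * c))"
    by (simp add: g_def sum_divide_distrib[symmetric] mult.commute)
  finally show ?thesis .
qed

lemma measure_no_pair_event_le_integral: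
  fixes G :: "(nat \<Rightarrow> 'b) \<Rightarrow> real" and M L :: nat
  assumes X: "prob_space X" and Y: "prob_space Y" and A: "A \<in> sets (X \<Otimes>\<^sub>M Y)"
    and G: "integrable (PiM {..<L} (\<lambda>_. Y)) G"
    and le_G: "\<And>v. v \<in> space (PiM {..<L} (\<lambda>_. Y)) \<Longrightarrow>
      (1 - measure X {x \<in> space X. \<exists>l<L. (x, v l) \<in> A}) ^ M \<le> G v"
  shows "measure (PiM {..<M} (\<lambda>_. X) \<Otimes>\<^sub>M PiM {..<L} (\<lambda>_. Y)) (no_pair_event X Y M L A)
    \<le> (\<integral>v. G v \<partial>PiM {..<L} (\<lambda>_. Y))"
proof -
  let ?PX = "PiM {..<M} (\<lambda>_. X)" and ?PY = "PiM {..<L} (\<lambda>_. Y)"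
  interpret X: prob_space X by fact
  interpret PXY: prob_space "?PX \<Otimes>\<^sub>M ?PY"
    by (intro prob_space_pair prob_space_PiM X Y)
  have G_nonneg: "AE v in ?PY. 0 \<le> G v"
    using le_G by (intro AE_I2) (meson order_trans zero_le_power X.prob_le_1 diff_ge_0_iff_ge)
  have "ennreal (measure (?PX \<Otimes>\<^sub>M ?PY) (no_pair_event X Y M L A))
      = (\<integral>\<^sup>+ v. ennreal ((1 - measure X {x \<in> space X. \<exists>l<L. (x, v l) \<in> A}) ^ M) \<partial>?PY)"
    unfolding PXY.emeasure_eq_measure[symmetric] by (rule emeasure_no_pair_event[OF X Y A])
  also have "\<dots> \<le> (\<integral>\<^sup>+ v. ennreal (G v) \<partial>?PY)"
    using le_G by (intro nn_integral_mono) (simp add: ennreal_leI)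
  also have "\<dots> = ennreal (\<integral>v. G v \<partial>?PY)"
    by (rule nn_integral_eq_integral[OF G G_nonneg])
  finally show ?thesis
    using G_nonneg by (simp add: ennreal_le_iff integral_nonneg_AE)
qed

lemma power_one_minus_prob_pair_le:
  fixes w :: "'a \<times> 'b \<Rightarrow> real" and M L :: nat and K :: real
  assumes X: "prob_space X" and A: "A \<in> sets (X \<Otimes>\<^sub>M Y)"
    and w: "w \<in> borel_measurable (X \<Otimes>\<^sub>M Y)" "\<And>z. 0 \<le> w z \<and> w z \<le> 1" "\<And>z. z \<notin> A \<Longrightarrow> w z = 0"
    and v: "v \<in> space (PiM {..<L} (\<lambda>_. Y))" and K: "0 < K"
  shows "(1 - measure X {x \<in> space X. \<exists>l<L. (x, v l) \<in> A}) ^ M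
    \<le> 1 - min 1 ((\<Sum>l<L. \<integral>x. w (x, v l) \<partial>X) / K)
      + (\<integral>x. (\<Sum>i<L. \<Sum>j<i. w (x, v i) * w (x, v j)) \<partial>X) / K + exp (- (M * K))"
proof -
  interpret X: prob_space X by fact
  let ?B = "{x \<in> space X. \<exists>l<L. (x, v l) \<in> A}"
  have B: "?B \<in> sets X"
    by (rule exists_pair_in_sets[OF A v])
  have w_section: "(\<lambda>x. w (x, v l)) \<in> borel_measurable X" if "l < L" for l
    using v that by (intro measurable_compose[OF measurable_Pair2' w(1)]) (auto simp: space_PiM)
  have support: "x \<in> ?B" if "l < L" "x \<in> space X" "w (x, v l) \<noteq> 0" for l x
    using that w(3) by blast
  have "(\<Sum>l<L. \<integral>x. w (x, v l) \<partial>X) - (\<integral>x. (\<Sum>i<L. \<Sum>j<i. w (x, v i) * w (x, v j)) \<partial>X)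
      \<le> measure X ?B"
    using w(2) w_section support by (intro sum_integrals_minus_pair_products_le_measure[OF X B]) auto
  moreover have "0 \<le> (\<integral>x. (\<Sum>i<L. \<Sum>j<i. w (x, v i) * w (x, v j)) \<partial>X)"
    using w by (intro integral_nonneg_AE AE_I2 sum_nonneg mult_nonneg_nonneg) auto
  ultimately show ?thesis
    using K X.prob_le_1 by (intro power_one_minus_le_one_minus_min) auto
qed

lemma measure_no_pair_event_le_weight:
  fixes w :: "'a \<times> 'b \<Rightarrow> real" and M L :: nat and c :: real
  assumes X: "prob_space X" and Y: "prob_space Y" and A: "A \<in> sets (X \<Otimes>\<^sub>M Y)"
    and w: "w \<in> borel_measurable (X \<Otimes>\<^sub>M Y)" "\<And>z. 0 \<le> w z \<and> w z \<le> 1" "\<And>z. z \<notin> A \<Longrightarrow> w z = 0"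
    and c: "0 < c"
    and w_fst: "AE x in X. (\<integral>y. w (x, y) \<partial>Y) \<le> c"
    and w_snd: "AE y in Y. (\<integral>x. w (x, y) \<partial>X) \<le> c"
    and L: "0 < L"
  shows "measure (PiM {..<M} (\<lambda>_. X) \<Otimes>\<^sub>M PiM {..<L} (\<lambda>_. Y)) (no_pair_event X Y M L A)
    \<le> 1 - (\<integral>z. w z \<partial>(X \<Otimes>\<^sub>M Y)) / c + L * c / 2 + exp (- (M * L * c))"
proof -
  let ?PY = "PiM {..<L} (\<lambda>_. Y)"
  interpret X: prob_space X by fact
  interpret PY: prob_space ?PY by (intro prob_space_PiM Y)
  define K where "K = L * c"
  define q where "q v = (\<Sum>l<L. \<integral>x. w (x, v l) \<partial>X)" for v
  define d where "d v = (\<integral>x. (\<Sum>i<L. \<Sum>j<i. w (x, v i) * w (x, v j)) \<partial>X)" for v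
  have K: "0 < K"
    using L c by (simp add: K_def)
  have q_nonneg: "0 \<le> q v" for v
    unfolding q_def using w by (intro sum_nonneg integral_nonneg_AE AE_I2) auto
  have q_meas: "q \<in> borel_measurable ?PY"
    unfolding q_def using borel_measurable_integral_first[OF X.sigma_finite_measure_axioms w(1)]
    by (intro borel_measurable_sum measurable_compose[OF measurable_component_singleton]) auto
  have d_int: "integrable ?PY d"
    unfolding d_def by (rule integrable_pair_products_weight[OF X Y w(1,2) w_fst])
  have min_int: "integrable ?PY (\<lambda>v. min 1 (q v / K))"
    using q_meas q_nonneg K
    by (intro PY.integrable_const_bound[where B=1] AE_I2 borel_measurable_min borel_measurable_divide)
       auto
  have "measure (PiM {..<M} (\<lambda>_. X) \<Otimes>\<^sub>M ?PY) (no_pair_event X Y M L A)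
      \<le> (\<integral>v. 1 - min 1 (q v / K) + d v / K + exp (- (M * K)) \<partial>?PY)"
  proof (rule measure_no_pair_event_le_integral[OF X Y A])
    show "integrable ?PY (\<lambda>v. 1 - min 1 (q v / K) + d v / K + exp (- (M * K)))"
      using min_int d_int by simp
  qed (unfold q_def d_def, rule power_one_minus_prob_pair_le[OF X A w _ K])
  also have "\<dots> = 1 - (\<integral>v. min 1 (q v / K) \<partial>?PY) + (\<integral>v. d v \<partial>?PY) / K + exp (- (M * L * c))"
    using min_int d_int by (simp add: PY.prob_space K_def mult.assoc)
  finally have "measure (PiM {..<M} (\<lambda>_. X) \<Otimes>\<^sub>M ?PY) (no_pair_event X Y M L A)
      \<le> 1 - (\<integral>v. min 1 (q v / K) \<partial>?PY) + (\<integral>v. d v \<partial>?PY) / K + exp (- (M * L * c))" .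
  moreover have "(\<integral>z. w z \<partial>(X \<Otimes>\<^sub>M Y)) / c \<le> (\<integral>v. min 1 (q v / K) \<partial>?PY)"
    unfolding q_def K_def by (rule integral_weight_le_integral_min_one[OF X Y w(1,2) c w_snd L])
  moreover have "(\<integral>v. d v \<partial>?PY) / K \<le> L * c / 2"
  proof -
    have "(\<integral>v. d v \<partial>?PY) \<le> real L ^ 2 * c\<^sup>2 / 2"
      unfolding d_def by (rule integral_pair_products_weight_le[OF X Y w(1,2) w_fst])
    also have "\<dots> = L * c / 2 * K"
      by (simp add: K_def power2_eq_square)
    finally show ?thesis
      using K by (simp add: divide_le_eq)
  qed
  ultimately show ?thesis
    by linarith
qed

lemma measure_no_pair_event_le_weight_min:
  fixes w :: "'a \<times> 'b \<Rightarrow> real" and M L :: nat and c :: real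
  assumes X: "prob_space X" and Y: "prob_space Y" and A: "A \<in> sets (X \<Otimes>\<^sub>M Y)"
    and w: "w \<in> borel_measurable (X \<Otimes>\<^sub>M Y)" "\<And>z. 0 \<le> w z \<and> w z \<le> 1" "\<And>z. z \<notin> A \<Longrightarrow> w z = 0"
    and c: "0 < c"
    and w_fst: "AE x in X. (\<integral>y. w (x, y) \<partial>Y) \<le> c"
    and w_snd: "AE y in Y. (\<integral>x. w (x, y) \<partial>X) \<le> c"
    and M: "0 < M" and L: "0 < L"
  shows "measure (PiM {..<M} (\<lambda>_. X) \<Otimes>\<^sub>M PiM {..<L} (\<lambda>_. Y)) (no_pair_event X Y M L A)
    \<le> 1 - (\<integral>z. w z \<partial>(X \<Otimes>\<^sub>M Y)) / c + min M L * c / 2 + exp (- (M * L * c))"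
proof -
  interpret X: prob_space X by fact
  interpret Y: prob_space Y by fact
  interpret XY: pair_sigma_finite X Y ..
  let ?A' = "(\<lambda>(y, x). (x, y)) -` A \<inter> space (Y \<Otimes>\<^sub>M X)"
  let ?w' = "\<lambda>(y, x). w (x, y)"
  have "measure (PiM {..<M} (\<lambda>_. X) \<Otimes>\<^sub>M PiM {..<L} (\<lambda>_. Y)) (no_pair_event X Y M L A)
      \<le> 1 - (\<integral>z. w z \<partial>(X \<Otimes>\<^sub>M Y)) / c + L * c / 2 + exp (- (M * L * c))"
    by (rule measure_no_pair_event_le_weight[OF X Y A w c w_fst w_snd L])
  moreover have "measure (PiM {..<M} (\<lambda>_. X) \<Otimes>\<^sub>M PiM {..<L} (\<lambda>_. Y)) (no_pair_event X Y M L A)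
      \<le> 1 - (\<integral>z. w z \<partial>(X \<Otimes>\<^sub>M Y)) / c + M * c / 2 + exp (- (M * L * c))"
  proof -
    have A': "?A' \<in> sets (Y \<Otimes>\<^sub>M X)"
      by (rule measurable_sets[OF measurable_pair_swap' A])
    have w': "?w' \<in> borel_measurable (Y \<Otimes>\<^sub>M X)"
      using measurable_compose[OF measurable_pair_swap' w(1)] by (simp add: case_prod_beta')
    have w'_A': "?w' z = 0" if "z \<notin> ?A'" for z
      using that w(3) sets.sets_into_space[OF A] by (auto simp: space_pair_measure split: prod.splits)
    have "measure (PiM {..<L} (\<lambda>_. Y) \<Otimes>\<^sub>M PiM {..<M} (\<lambda>_. X)) (no_pair_event Y X L M ?A')
        \<le> 1 - (\<integral>z. ?w' z \<partial>(Y \<Otimes>\<^sub>M X)) / c + M * c / 2 + exp (- (L * M * c))"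
      using w(2) w_fst w_snd w'_A'
      by (intro measure_no_pair_event_le_weight[OF Y X A' w' _ _ c _ _ M]) (auto split: prod.splits)
    then show ?thesis
      using XY.integral_product_swap[OF w(1)]
      by (simp add: measure_no_pair_event_swap[OF X Y A] mult.commute mult.left_commute)
  qed
  ultimately show ?thesis
    by (cases "M \<le> L") (simp_all add: min_def)
qed

lemma integral_le_of_ennreal_le_mult:
  fixes h :: "'a \<Rightarrow> real" and g :: "'a \<Rightarrow> ennreal"
  assumes g: "g \<in> borel_measurable Y" "(\<integral>\<^sup>+ y. g y \<partial>Y) = 1"
    and h_le: "\<And>y. ennreal (h y) \<le> ennreal c * g y" and c: "0 \<le> c"
  shows "(\<integral>y. h y \<partial>Y) \<le> c"
proof (rule integral_real_bounded[OF c])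
  have "(\<integral>\<^sup>+ y. ennreal (h y) \<partial>Y) \<le> (\<integral>\<^sup>+ y. ennreal c * g y \<partial>Y)"
    using h_le by (intro nn_integral_mono) auto
  also have "\<dots> = ennreal c"
    using g by (simp add: nn_integral_cmult)
  finally show "(\<integral>\<^sup>+ y. ennreal (h y) \<partial>Y) \<le> ennreal c" .
qed

lemma ennreal_truncated_density:
  fixes f :: "'a \<Rightarrow> ennreal" and c :: real
  assumes c: "0 < c" and f_A: "z \<in> A \<Longrightarrow> ennreal c * f z \<le> 1"
  shows "ennreal (c * enn2real (f z) * indicator A z) = ennreal c * (f z * indicator A z)"
proof (cases "z \<in> A")
  case True
  then have "f z \<noteq> \<top>"
    using f_A c by (auto simp: ennreal_mult_top top_unique)
  then show ?thesis
    using True c by (simp add: ennreal_mult ennreal_enn2real_if less_top)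
qed simp

lemma integral_truncated_density:
  fixes f :: "'a \<Rightarrow> ennreal" and c :: real
  assumes N: "finite_measure N" and f: "f \<in> borel_measurable N" and A: "A \<in> sets N"
    and c: "0 < c" and f_A: "\<And>z. z \<in> A \<Longrightarrow> ennreal c * f z \<le> 1"
  shows "(\<integral>z. c * enn2real (f z) * indicator A z \<partial>N) = c * measure (density N f) A"
proof -
  interpret N: finite_measure N by fact
  have bounds: "0 \<le> c * enn2real (f z) * indicator A z \<and> c * enn2real (f z) * indicator A z \<le> 1" for z
    using ennreal_truncated_density[where f=f and A=A and z=z, OF c f_A] f_A[of z] c
    by (cases "z \<in> A") (simp_all add: ennreal_le_1[symmetric] del: ennreal_le_1)
  have "integrable N (\<lambda>z. c * enn2real (f z) * indicator A z)"
    using f A bounds by (intro N.integrable_const_bound[where B=1] AE_I2) auto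
  then have "ennreal (\<integral>z. c * enn2real (f z) * indicator A z \<partial>N)
      = (\<integral>\<^sup>+ z. ennreal (c * enn2real (f z) * indicator A z) \<partial>N)"
    using bounds by (intro nn_integral_eq_integral[symmetric]) auto
  also have "\<dots> = (\<integral>\<^sup>+ z. ennreal c * (f z * indicator A z) \<partial>N)"
    by (simp only: ennreal_truncated_density[where f=f and A=A, OF c f_A])
  also have "\<dots> = ennreal c * emeasure (density N f) A"
    using f A by (simp add: nn_integral_cmult emeasure_density)
  finally have eq: "ennreal (\<integral>z. c * enn2real (f z) * indicator A z \<partial>N) = ennreal c * emeasure (density N f) A" .
  then have "emeasure (density N f) A \<noteq> \<top>"
    using c by (auto simp: ennreal_mult_top)
  then have "ennreal (\<integral>z. c * enn2real (f z) * indicator A z \<partial>N) = ennreal (c * measure (density N f) A)"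
    using eq c by (simp add: emeasure_eq_ennreal_measure ennreal_mult)
  moreover have "0 \<le> (\<integral>z. c * enn2real (f z) * indicator A z \<partial>N)"
    using bounds by (intro integral_nonneg_AE AE_I2) auto
  ultimately show ?thesis
    using c by (simp add: ennreal_inj)
qed

lemma measure_no_pair_event_le_density:
  fixes f :: "'a \<times> 'b \<Rightarrow> ennreal" and M L :: nat and c :: real
  assumes X: "prob_space X" and Y: "prob_space Y" and f: "f \<in> borel_measurable (X \<Otimes>\<^sub>M Y)"
    and f_fst: "AE x in X. (\<integral>\<^sup>+ y. f (x, y) \<partial>Y) = 1"
    and f_snd: "AE y in Y. (\<integral>\<^sup>+ x. f (x, y) \<partial>X) = 1"
    and A: "A \<in> sets (X \<Otimes>\<^sub>M Y)" and f_A: "\<And>z. z \<in> A \<Longrightarrow> ennreal c * f z \<le> 1"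
    and c: "0 < c" and M: "0 < M" and L: "0 < L"
  shows "measure (PiM {..<M} (\<lambda>_. X) \<Otimes>\<^sub>M PiM {..<L} (\<lambda>_. Y)) (no_pair_event X Y M L A)
    \<le> 1 - measure (density (X \<Otimes>\<^sub>M Y) f) A + min M L * c / 2 + exp (- (M * L * c))"
proof -
  interpret XY: prob_space "X \<Otimes>\<^sub>M Y"
    by (intro prob_space_pair X Y)
  define w where "w z = c * enn2real (f z) * indicator A z" for z
  have w_ennreal: "ennreal (w z) = ennreal c * (f z * indicator A z)" for z
    unfolding w_def by (rule ennreal_truncated_density[where f=f and A=A, OF c f_A])
  have w_meas: "w \<in> borel_measurable (X \<Otimes>\<^sub>M Y)"
    unfolding w_def using f A by measurable
  have w_bounds: "0 \<le> w z \<and> w z \<le> 1" for z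
  proof -
    have "ennreal (w z) \<le> 1"
      using f_A[of z] by (cases "z \<in> A") (simp_all add: w_ennreal)
    then show ?thesis
      using c by (simp add: w_def)
  qed
  have w_A: "w z = 0" if "z \<notin> A" for z
    using that by (simp add: w_def)
  have w_le: "ennreal (w z) \<le> ennreal c * f z" for z
    unfolding w_ennreal by (simp add: indicator_def)
  have w_fst: "AE x in X. (\<integral>y. w (x, y) \<partial>Y) \<le> c"
    using f_fst AE_space
  proof eventually_elim
    case (elim x)
    show ?case
      by (rule integral_le_of_ennreal_le_mult[OF measurable_compose_Pair1[OF elim(2) f] elim(1) w_le])
         (use c in simp)
  qed
  have w_snd: "AE y in Y. (\<integral>x. w (x, y) \<partial>X) \<le> c"
    using f_snd AE_space
  proof eventually_elim
    case (elim y)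
    show ?case
      by (rule integral_le_of_ennreal_le_mult[OF measurable_compose[OF measurable_Pair2'[OF elim(2)] f]
            elim(1) w_le])
         (use c in simp)
  qed
  have "(\<integral>z. w z \<partial>(X \<Otimes>\<^sub>M Y)) = c * measure (density (X \<Otimes>\<^sub>M Y) f) A"
    unfolding w_def using f A c f_A
    by (intro integral_truncated_density XY.finite_measure_axioms)
  then show ?thesis
    using measure_no_pair_event_le_weight_min[OF X Y A w_meas w_bounds w_A c w_fst w_snd M L] c
    by simp
qed

lemma prob_space_marg1:
  assumes "prob_space P" "sets P = sets (MU \<Otimes>\<^sub>M MV)"
  shows "prob_space (marg1 P MU)"
  unfolding marg1_def
  by (rule prob_space.prob_space_distr[OF assms(1)]) (simp add: measurable_cong_sets[OF assms(2) refl])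

lemma prob_space_marg2:
  assumes "prob_space P" "sets P = sets (MU \<Otimes>\<^sub>M MV)"
  shows "prob_space (marg2 P MV)"
  unfolding marg2_def
  by (rule prob_space.prob_space_distr[OF assms(1)]) (simp add: measurable_cong_sets[OF assms(2) refl])

lemma sets_eq_sets_marg_pair:
  assumes "sets P = sets (MU \<Otimes>\<^sub>M MV)"
  shows "sets P = sets (marg1 P MU \<Otimes>\<^sub>M marg2 P MV)"
  using assms by (simp add: marg1_def marg2_def cong: sets_pair_measure_cong)

lemma AE_RN_deriv_pos:
  assumes Q: "sigma_finite_measure Q" and P: "finite_measure P"
    and ac: "absolutely_continuous Q P" and sets_eq: "sets P = sets Q"
  shows "AE z in P. 0 < enn2real (RN_deriv Q P z)"
proof -
  interpret Q: sigma_finite_measure Q by fact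
  obtain D where D: "AE z in Q. RN_deriv Q P z = ennreal (D z)" "AE z in P. 0 < D z"
    by (rule Q.real_RN_deriv[OF P ac sets_eq]) blast
  have "AE z in P. RN_deriv Q P z = ennreal (D z)"
    by (rule absolutely_continuous_AE[OF sets_eq ac D(1)])
  with D(2) show ?thesis
    by eventually_elim simp
qed

lemma
  assumes P: "prob_space P" and sets_P: "sets P = sets (MU \<Otimes>\<^sub>M MV)"
    and ac: "absolutely_continuous (marg1 P MU \<Otimes>\<^sub>M marg2 P MV) P"
  shows AE_RN_deriv_marg1:
      "AE x in marg1 P MU. (\<integral>\<^sup>+ y. RN_deriv (marg1 P MU \<Otimes>\<^sub>M marg2 P MV) P (x, y) \<partial>marg2 P MV) = 1"
    and AE_RN_deriv_marg2:
      "AE y in marg2 P MV. (\<integral>\<^sup>+ x. RN_deriv (marg1 P MU \<Otimes>\<^sub>M marg2 P MV) P (x, y) \<partial>marg1 P MU) = 1"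
proof -
  interpret P: prob_space P by fact
  let ?PU = "marg1 P MU" and ?PV = "marg2 P MV"
  let ?Q = "?PU \<Otimes>\<^sub>M ?PV" and ?f = "RN_deriv (marg1 P MU \<Otimes>\<^sub>M marg2 P MV) P"
  have fst: "fst \<in> measurable P MU" and snd: "snd \<in> measurable P MV"
    by (simp_all add: measurable_cong_sets[OF sets_P refl])
  interpret PU: prob_space ?PU
    by (rule prob_space_marg1[OF P sets_P])
  interpret PV: prob_space ?PV
    by (rule prob_space_marg2[OF P sets_P])
  interpret Q: pair_sigma_finite ?PU ?PV ..
  have sets_Q: "sets P = sets ?Q"
    by (rule sets_eq_sets_marg_pair[OF sets_P])
  have joint: "distributed P ?Q (\<lambda>z. (fst z, snd z)) ?f"
    unfolding distributed_def
    using Q.density_RN_deriv[OF ac sets_Q] distr_id2[OF sets_Q[symmetric]] by (simp add: measurable_ident_sets[OF sets_Q])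
  have "distr P ?PU fst = ?PU"
    unfolding marg1_def by (intro distr_cong) simp_all
  then have "distributed P ?PU fst (\<lambda>_. 1)"
    unfolding distributed_def using fst by (simp add: density_1 marg1_def)
  from P.distributed_marginal_eq_joint1[OF PV.sigma_finite_measure_axioms PU.sigma_finite_measure_axioms this joint]
  show "AE x in ?PU. (\<integral>\<^sup>+ y. ?f (x, y) \<partial>?PV) = 1"
    by (auto elim: AE_mp)
  have "distr P ?PV snd = ?PV"
    unfolding marg2_def by (intro distr_cong) simp_all
  then have "distributed P ?PV snd (\<lambda>_. 1)"
    unfolding distributed_def using snd by (simp add: density_1 marg2_def)
  from P.distributed_marginal_eq_joint2[OF PV.sigma_finite_measure_axioms PU.sigma_finite_measure_axioms this joint]
  show "AE y in ?PV. (\<integral>\<^sup>+ x. ?f (x, y) \<partial>?PU) = 1"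
    by (auto elim: AE_mp)
qed

lemma (in prob_space) one_minus_prob_ln_less_le:
  fixes g :: "'a \<Rightarrow> real"
  assumes F: "F \<in> events" and g: "g \<in> borel_measurable M" and pos: "AE z in M. 0 < g z"
  shows "1 - prob {z \<in> space M. z \<in> F \<and> 0 < g z \<and> ln (g z) < t}
    \<le> prob (space M - F) + prob {z \<in> space M. t \<le> ln (g z)}"
proof -
  let ?A = "{z \<in> space M. z \<in> F \<and> 0 < g z \<and> ln (g z) < t}"
  let ?I = "{z \<in> space M. t \<le> ln (g z)}"
  have sets: "?A \<in> events" "space M - F \<in> events" "?I \<in> events"
    using F g by measurable
  have "1 - prob ?A = prob (space M - ?A)"
    using sets by (simp add: prob_compl)
  also have "\<dots> \<le> prob ((space M - F) \<union> ?I)"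
  proof (rule finite_measure_mono_AE)
    show "AE z in M. z \<in> space M - ?A \<longrightarrow> z \<in> (space M - F) \<union> ?I"
      using pos by eventually_elim auto
  qed (use sets in auto)
  also have "\<dots> \<le> prob (space M - F) + prob ?I"
    using sets by (intro measure_subadditive) auto
  finally show ?thesis .
qed

lemma ennreal_exp_mult_le_one:
  fixes x :: ennreal
  assumes "0 < enn2real x" "ln (enn2real x) < t"
  shows "ennreal (exp (- t)) * x \<le> 1"
proof -
  have "enn2real x < exp t"
    using assms by (metis exp_less_cancel_iff exp_ln)
  then have "exp (- t) * enn2real x \<le> 1"
    by (simp add: exp_minus field_simps)
  moreover have "x = ennreal (enn2real x)"
    using assms(1) by (cases x) auto
  ultimately show ?thesis
    by (metis ennreal_mult ennreal_le_1 exp_ge_zero enn2real_nonneg)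
qed

lemma measure_no_pair_event_le_info_density:
  fixes M L :: nat and t :: real
  assumes P: "prob_space P" and sets_P: "sets P = sets (MU \<Otimes>\<^sub>M MV)"
    and ac: "absolutely_continuous (marg1 P MU \<Otimes>\<^sub>M marg2 P MV) P"
    and F: "F \<in> sets (MU \<Otimes>\<^sub>M MV)" and M: "0 < M" and L: "0 < L"
  shows "measure (PiM {..<M} (\<lambda>_. marg1 P MU) \<Otimes>\<^sub>M PiM {..<L} (\<lambda>_. marg2 P MV))
      (no_pair_event (marg1 P MU) (marg2 P MV) M L F)
    \<le> measure P (space P - F) + measure P {z \<in> space P. t \<le> info_density P MU MV z}
      + min M L * exp (- t) / 2 + exp (- (M * L * exp (- t)))"
proof -
  interpret P: prob_space P by fact
  let ?PU = "marg1 P MU" and ?PV = "marg2 P MV"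
  let ?f = "RN_deriv (?PU \<Otimes>\<^sub>M ?PV) P"
  define A where "A = {z \<in> space P. z \<in> F \<and> 0 < enn2real (?f z) \<and> ln (enn2real (?f z)) < t}"
  have PU: "prob_space ?PU" and PV: "prob_space ?PV"
    by (rule prob_space_marg1[OF P sets_P], rule prob_space_marg2[OF P sets_P])
  let ?PUV = "PiM {..<M} (\<lambda>_. ?PU) \<Otimes>\<^sub>M PiM {..<L} (\<lambda>_. ?PV)"
  interpret PUV: prob_space ?PUV
    by (intro prob_space_pair prob_space_PiM PU PV)
  have sets_Q: "sets P = sets (?PU \<Otimes>\<^sub>M ?PV)"
    by (rule sets_eq_sets_marg_pair[OF sets_P])
  have f_meas: "?f \<in> borel_measurable P"
    by (simp add: measurable_cong_sets[OF sets_Q refl])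
  have F': "F \<in> sets P"
    using F sets_P by simp
  have A_sets: "A \<in> sets (?PU \<Otimes>\<^sub>M ?PV)"
    unfolding A_def sets_Q[symmetric] using F' f_meas by measurable
  have f_A: "ennreal (exp (- t)) * ?f z \<le> 1" if "z \<in> A" for z
    using that by (intro ennreal_exp_mult_le_one) (auto simp: A_def)
  have "measure ?PUV (no_pair_event ?PU ?PV M L F) \<le> measure ?PUV (no_pair_event ?PU ?PV M L A)"
    by (intro PUV.finite_measure_mono no_pair_event_antimono no_pair_event_in_sets A_sets)
       (auto simp: A_def)
  also have "\<dots> \<le> 1 - measure P A + min M L * exp (- t) / 2 + exp (- (M * L * exp (- t)))"
    using measure_no_pair_event_le_density[OF PU PV borel_measurable_RN_deriv
        AE_RN_deriv_marg1[OF P sets_P ac] AE_RN_deriv_marg2[OF P sets_P ac] A_sets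
        f_A exp_gt_zero M L]
    by (simp add: A_def sigma_finite_measure.density_RN_deriv[OF
          prob_space_imp_sigma_finite[OF prob_space_pair[OF PU PV]] ac sets_Q])
  also have "1 - measure P A \<le> measure P (space P - F) + measure P {z \<in> space P. t \<le> info_density P MU MV z}"
    unfolding A_def info_density_def
    by (intro P.one_minus_prob_ln_less_le F' borel_measurable_enn2real f_meas AE_RN_deriv_pos
        prob_space_imp_sigma_finite prob_space_pair PU PV P.finite_measure_axioms ac sets_Q)
  finally show ?thesis
    by simp
qed

theorem mainTheorem16:
  fixes P :: "('a \<times> 'b) measure" and MU :: "'a measure" and MV :: "'b measure"
    and M L :: nat and \<tau> :: real and F :: "('a \<times> 'b) set"
  assumes "prob_space P"
    and "sets P = sets (MU \<Otimes>\<^sub>M MV)"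
    and "absolutely_continuous (marg1 P MU \<Otimes>\<^sub>M marg2 P MV) P"
    and "M > 0" and "L > 0" and "\<tau> > 0"
    and "F \<in> sets (MU \<Otimes>\<^sub>M MV)"
  shows "measure (PiM {..<M} (\<lambda>_. marg1 P MU) \<Otimes>\<^sub>M PiM {..<L} (\<lambda>_. marg2 P MV))
           {(u, v) \<in> space (PiM {..<M} (\<lambda>_. marg1 P MU) \<Otimes>\<^sub>M PiM {..<L} (\<lambda>_. marg2 P MV)).
              \<forall>m<M. \<forall>l<L. (u m, v l) \<notin> F}
         \<le> measure P (space P - F)
           + measure P {z \<in> space P. info_density P MU MV z \<ge> ln (real M * real L) - \<tau>}
           + exp \<tau> / real (max M L)
           + exp (- (1/2) * exp \<tau>)"
proof -
  note M = \<open>M > 0\<close> and L = \<open>L > 0\<close>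
  \<comment> \<open>with \<open>t = log (M L) - \<tau>\<close> the general bound even gives \<open>e\<^sup>\<tau>/(2 max M L)\<close> and \<open>exp (-e\<^sup>\<tau>)\<close>\<close>
  have exp_t: "exp (- (ln (real M * real L) - \<tau>)) = exp \<tau> / (real M * real L)"
    using M L by (simp add: exp_diff exp_minus field_simps)
  have "min M L * (exp \<tau> / (real M * real L)) / 2 \<le> exp \<tau> / max M L"
    using M L by (cases "M \<le> L") (simp_all add: min_def max_def field_simps)
  moreover have "exp (- (M * L * (exp \<tau> / (real M * real L)))) \<le> exp (- (1/2) * exp \<tau>)"
    using M L by simp
  ultimately show ?thesis
    using measure_no_pair_event_le_info_density[OF assms(1-3,7) M L, of "ln (real M * real L) - \<tau>"]
    unfolding no_pair_event_def exp_t by linarith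
qed

end
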